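(* Let $M=\{1,\dots,m\}$ with $m\ge2$ and let $t_1,\dots,t_m$ be nonzero variables; write $t_I=\sum_{i\in I}t_i$. Then $$\sum_{\substack{I\sqcup J=M\\ I,J\neq\emptyset}} t_I^{|I|-2}t_J^{|J|-2}=t_M^{m-4}\left(2t_M\left(\frac1{t_1}+\dots+\frac1{t_m}\right)-(m-2)(m-3)\right),$$ where the sum runs over ordered pairs $(I,J)$ of disjoint nonempty subsets with union $M$. Equivalently, for any partition $\kappa=(k_1,\dots,k_m)$ of $n$, $$\frac12\sum_{(\lambda,\mu)}\frac{|\lambda|^{l(\lambda)-2}}{|\mathrm{Aut}(\lambda)|}\frac{|\mu|^{l(\mu)-2}}{|\mathrm{Aut}(\mu)|}|\mathrm{Aut}(\kappa)|=n^{m-4}\left(n\sum_{i=1}^m\frac1{k_i}-\frac12(m-2)(m-3)\right),$$ the sum over ordered pairs of nonempty partitions with $\lambda\oplus\mu=\kappa$.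
   Context: For a partition $\tau$, $|\tau|$ is the sum of parts, $l(\tau)$ the number of parts, $|\mathrm{Aut}(\tau)|$ the product of factorials of multiplicities of distinct parts; $\lambda\oplus\mu$ is the partition whose multiset of parts is the union of those of $\lambda$ and $\mu$. *)

theory Defs
  imports Complex_Main "HOL-Library.Multiset"
begin

text \<open>Partitions are represented as multisets of positive naturals (their parts).
  |tau| = sum_mset tau, l(tau) = size tau, and |Aut(tau)| is the product over the
  distinct parts of the factorial of their multiplicities.
  The direct sum lambda (+) mu is multiset union (+).\<close>

definition is_partition :: "nat multiset \<Rightarrow> bool" where
  "is_partition \<tau> \<longleftrightarrow> (\<forall>k\<in>#\<tau>. 0 < k)"

definition aut :: "nat multiset \<Rightarrow> nat" where
  "aut \<tau> = (\<Prod>x\<in>set_mset \<tau>. fact (count \<tau> x))"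

end

theory Submission
  imports Defs
begin

(*
  Write the Abel polynomials A_x(I) = x (x + t_I)^(|I|-1), which satisfy Abel's identity
  sum_{I <= S} A_x(I) A_y(S - I) = A_{x+y}(S). Pointing the block I at a fixed e in M turns
  t_e t_I^(|I|-2) into A_{t_e}(I - {e}), while the complementary factor t_J^(|J|-2) equals
  sum_b A_{t_b}(J - {b}) / t_b - 1/2 sum_{a <> b} A_{t_a + t_b}(J - {a, b}). Abel's identity then
  collapses the sum over I into explicit powers of t_M. Abel's identity itself follows from the
  finite-difference evaluation sum_I A_x(I) (y + t_{S-I})^|S-I| = (x + y + t_S)^|S|, after
  cancelling a common convolution factor. The multiset version is the set version with t_i = k_i,
  since |Aut kappa| / (|Aut lambda| |Aut mu|) is the number of sets of positions carrying lambda.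
*)

definition weight :: "('b \<Rightarrow> 'a::comm_monoid_add) \<Rightarrow> 'b set \<Rightarrow> 'a" where
  "weight t I = (\<Sum>i\<in>I. t i)"

lemma weight_empty [simp]: "weight t {} = 0"
  by (simp add: weight_def)

lemma weight_remove: "finite I \<Longrightarrow> e \<in> I \<Longrightarrow> weight t I = t e + weight t (I - {e})"
  unfolding weight_def by (simp add: sum.remove)

lemma weight_remove2:
  "finite I \<Longrightarrow> a \<in> I \<Longrightarrow> b \<in> I \<Longrightarrow> a \<noteq> b \<Longrightarrow> weight t I = t a + t b + weight t (I - {a, b})"
  using weight_remove[of I a t] weight_remove[of "I - {a}" b t]
  by (simp add: Diff_insert2[symmetric] insert_commute add.assoc)

lemma weight_Diff: "finite S \<Longrightarrow> I \<subseteq> S \<Longrightarrow> weight t S = weight t I + weight t (S - I)"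
  unfolding weight_def by (metis add.commute sum.subset_diff)

lemma sum_Pow_insert:
  assumes "finite T" "a \<notin> T"
  shows "(\<Sum>I\<in>Pow (insert a T). g I) = (\<Sum>I\<in>Pow T. g I) + (\<Sum>I\<in>Pow T. g (insert a I))"
proof -
  have "Pow T \<inter> insert a ` Pow T = {}" using assms by auto
  moreover have "inj_on (insert a) (Pow T)" using assms
    unfolding inj_on_def by (metis PowD insert_ident subsetD)
  ultimately show ?thesis using assms
    by (simp add: Pow_insert sum.union_disjoint sum.reindex)
qed

text \<open>An iterated finite difference of order \<open>card T\<close> annihilates polynomials of lower degree.\<close>

lemma sum_Pow_alternating_power_eq_0:
  fixes t :: "'b \<Rightarrow> 'a::comm_ring_1"
  assumes "finite T" "d < card T"
  shows "(\<Sum>I\<in>Pow T. (-1) ^ card (T - I) * (c + weight t I) ^ d) = 0"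
  using assms
proof (induction T arbitrary: c d rule: finite_induct)
  case empty
  then show ?case by simp
next
  case (insert a T)
  have card_Diff: "card (insert a T - I) = Suc (card (T - I))" if "I \<in> Pow T" for I
  proof -
    have "insert a T - I = insert a (T - I)" using that insert by auto
    then show ?thesis using insert by simp
  qed
  have card_Diff_insert: "card (insert a T - insert a I) = card (T - I)" if "I \<in> Pow T" for I
    using that insert by (metis Diff_insert2 Diff_insert_absorb)
  have weight_insert: "weight t (insert a I) = t a + weight t I" if "I \<in> Pow T" for I
    using that insert by (auto simp: weight_def intro!: sum.insert dest: finite_subset)
  have binomial: "(c + weight t I + t a) ^ d - (c + weight t I) ^ d
      = (\<Sum>j<d. of_nat (d choose j) * (c + weight t I) ^ j * t a ^ (d - j))" for I
    by (simp add: binomial_ring lessThan_Suc_atMost[symmetric])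
  have "(\<Sum>I\<in>Pow (insert a T). (-1) ^ card (insert a T - I) * (c + weight t I) ^ d)
     = (\<Sum>I\<in>Pow T. (-1) ^ card (T - I) * ((c + weight t I + t a) ^ d - (c + weight t I) ^ d))"
    using insert
    by (simp add: sum_Pow_insert card_Diff card_Diff_insert weight_insert sum.distrib[symmetric]
        algebra_simps)
  also have "\<dots> = (\<Sum>I\<in>Pow T. (-1) ^ card (T - I) *
      (\<Sum>j<d. of_nat (d choose j) * (c + weight t I) ^ j * t a ^ (d - j)))"
    by (simp only: binomial)
  also have "\<dots> = (\<Sum>j<d. of_nat (d choose j) * t a ^ (d - j) *
      (\<Sum>I\<in>Pow T. (-1) ^ card (T - I) * (c + weight t I) ^ j))"
    by (simp add: sum_distrib_left sum_distrib_right sum.swap[of _ "Pow T"] algebra_simps)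
  also have "\<dots> = 0"
    using insert by (intro sum.neutral) simp
  finally show ?case .
qed

definition abel_poly :: "('b \<Rightarrow> 'a::comm_ring_1) \<Rightarrow> 'a \<Rightarrow> 'b set \<Rightarrow> 'a" where
  "abel_poly t x I = (if I = {} then 1 else x * (x + weight t I) ^ (card I - 1))"

lemma sum_Pow_choose_card_Diff:
  fixes G :: "'b set \<Rightarrow> nat \<Rightarrow> 'a::comm_semiring_1"
  assumes "finite S"
  shows "(\<Sum>I\<in>Pow S. of_nat (card (S - I) choose i) * G I (card (S - I) - i))
       = (\<Sum>K\<in>{K. K \<subseteq> S \<and> card K = i}. \<Sum>I\<in>Pow (S - K). G I (card (S - K - I)))"
proof -
  let ?Ks = "{K. K \<subseteq> S \<and> card K = i}"
  have fin_Ks: "finite ?Ks" using assms by auto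
  have "(\<Sum>K\<in>?Ks. \<Sum>I\<in>Pow (S - K). G I (card (S - K - I)))
      = (\<Sum>K\<in>?Ks. \<Sum>I\<in>Pow S. if K \<subseteq> S - I then G I (card (S - I) - i) else 0)"
  proof (rule sum.cong[OF refl])
    fix K assume K: "K \<in> ?Ks"
    have card_eq: "card (S - I) - i = card (S - K - I)" if "I \<in> Pow (S - K)" for I
    proof -
      have "S - I = K \<union> (S - K - I)" "K \<inter> (S - K - I) = {}" using that K by auto
      then have "card (S - I) = card K + card (S - K - I)"
        using assms K by (metis card_Un_disjoint finite_Diff finite_subset mem_Collect_eq)
      then show ?thesis using K by simp
    qed
    have "{I \<in> Pow S. K \<subseteq> S - I} = Pow (S - K)" using K by auto
    then show "(\<Sum>I\<in>Pow (S - K). G I (card (S - K - I)))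
        = (\<Sum>I\<in>Pow S. if K \<subseteq> S - I then G I (card (S - I) - i) else 0)"
      using assms by (simp add: sum.inter_filter[symmetric] card_eq)
  qed
  also have "\<dots> = (\<Sum>I\<in>Pow S. \<Sum>K\<in>?Ks. if K \<subseteq> S - I then G I (card (S - I) - i) else 0)"
    by (rule sum.swap)
  also have "\<dots> = (\<Sum>I\<in>Pow S. of_nat (card (S - I) choose i) * G I (card (S - I) - i))"
  proof (rule sum.cong[OF refl])
    fix I assume "I \<in> Pow S"
    have "{K \<in> ?Ks. K \<subseteq> S - I} = {K. K \<subseteq> S - I \<and> card K = i}" by auto
    moreover have "card {K. K \<subseteq> S - I \<and> card K = i} = card (S - I) choose i"
      using assms by (simp add: n_subsets)
    ultimately show "(\<Sum>K\<in>?Ks. if K \<subseteq> S - I then G I (card (S - I) - i) else 0)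
        = of_nat (card (S - I) choose i) * G I (card (S - I) - i)"
      using fin_Ks by (simp add: sum.inter_filter[symmetric])
  qed
  finally show ?thesis by simp
qed

lemma sum_Pow_abel_poly_alternating:
  fixes t :: "'b \<Rightarrow> 'a::comm_ring_1"
  assumes "finite T"
  shows "(\<Sum>I\<in>Pow T. abel_poly t x I * (- (x + weight t I)) ^ card (T - I)) = (if T = {} then 1 else 0)"
proof (cases "T = {}")
  case True
  then show ?thesis by (simp add: abel_poly_def)
next
  case False
  then have card_T: "card T \<ge> 1" using assms by (simp add: Suc_leI card_gt_0_iff)
  have "abel_poly t x I * (- (x + weight t I)) ^ card (T - I)
      = x * ((-1) ^ card (T - I) * (x + weight t I) ^ (card T - 1))" if I: "I \<in> Pow T" for I
  proof -
    have "finite I" using I assms finite_subset by auto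
    have card_I: "card I \<le> card T" using I assms card_mono by auto
    have card_Diff: "card (T - I) = card T - card I"
      using I assms by (simp add: card_Diff_subset \<open>finite I\<close>)
    show ?thesis
    proof (cases "I = {}")
      case True
      obtain k where "card T = Suc k" using card_T by (metis Suc_diff_1 less_le_trans zero_less_one)
      then show ?thesis using True by (simp add: abel_poly_def power_minus[of x] mult_ac)
    next
      case False
      then have "card I \<ge> 1" using \<open>finite I\<close> by (simp add: Suc_leI card_gt_0_iff)
      then have "card I - 1 + (card T - card I) = card T - 1" using card_I by simp
      then show ?thesis
        using False unfolding power_minus[of "x + weight t I"]
        by (simp add: abel_poly_def card_Diff mult_ac power_add[symmetric])
    qed
  qed
  then have "(\<Sum>I\<in>Pow T. abel_poly t x I * (- (x + weight t I)) ^ card (T - I))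
      = x * (\<Sum>I\<in>Pow T. (-1) ^ card (T - I) * (x + weight t I) ^ (card T - 1))"
    by (simp add: sum_distrib_left)
  also have "\<dots> = 0"
    using sum_Pow_alternating_power_eq_0[OF assms, where d = "card T - 1" and c = x] card_T by simp
  finally show ?thesis using False by simp
qed

lemma sum_card_subsets_abel_poly_alternating:
  fixes t :: "'b \<Rightarrow> 'a::comm_ring_1"
  assumes S: "finite S"
  shows "(\<Sum>K\<in>{K. K \<subseteq> S \<and> card K = i}.
            \<Sum>I\<in>Pow (S - K). abel_poly t x I * (- (x + weight t I)) ^ card (S - K - I))
       = (if i = card S then 1 else 0)"
proof -
  have "(\<Sum>K\<in>{K. K \<subseteq> S \<and> card K = i}.
            \<Sum>I\<in>Pow (S - K). abel_poly t x I * (- (x + weight t I)) ^ card (S - K - I))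
      = (\<Sum>K\<in>{K. K \<subseteq> S \<and> card K = i}. if S - K = {} then 1 else 0)"
    by (intro sum.cong refl sum_Pow_abel_poly_alternating) (use S in auto)
  also have "\<dots> = (if i = card S then 1 else 0)"
  proof (cases "i = card S")
    case True
    then have "{K. K \<subseteq> S \<and> card K = i} = {S}" using S by (auto dest: card_subset_eq)
    then show ?thesis using True by simp
  next
    case False
    then show ?thesis by (intro trans[OF sum.neutral]) auto
  qed
  finally show ?thesis .
qed

text \<open>Expanding \<open>y + t\<^sub>S\<^sub>-\<^sub>I = (x + y + t\<^sub>S) - (x + t\<^sub>I)\<close> binomially, the coefficient
  of \<open>(x + y + t\<^sub>S)\<^sup>i\<close> is the alternating sum above, which vanishes unless \<open>i = |S|\<close>.\<close>

lemma abel_identity_power: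
  fixes t :: "'b \<Rightarrow> 'a::comm_ring_1"
  assumes S: "finite S"
  shows "(\<Sum>I\<in>Pow S. abel_poly t x I * (y + weight t (S - I)) ^ card (S - I))
       = (x + y + weight t S) ^ card S"
proof -
  define W where "W = x + y + weight t S"
  define n where "n = card S"
  define G where "G = (\<lambda>I k. abel_poly t x I * (- (x + weight t I)) ^ k)"
  have expand: "abel_poly t x I * (y + weight t (S - I)) ^ card (S - I)
      = (\<Sum>i\<le>n. W ^ i * (of_nat (card (S - I) choose i) * G I (card (S - I) - i)))"
    if I: "I \<in> Pow S" for I
  proof -
    have "y + weight t (S - I) = W + (- (x + weight t I))"
      using weight_Diff[OF S, of I t] I by (simp add: W_def)
    then have "(y + weight t (S - I)) ^ card (S - I) = (\<Sum>i\<le>card (S - I).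
        of_nat (card (S - I) choose i) * W ^ i * (- (x + weight t I)) ^ (card (S - I) - i))"
      by (simp add: binomial_ring)
    also have "\<dots> = (\<Sum>i\<le>n.
        of_nat (card (S - I) choose i) * W ^ i * (- (x + weight t I)) ^ (card (S - I) - i))"
    proof (rule sum.mono_neutral_left)
      show "{..card (S - I)} \<subseteq> {..n}" using S by (auto simp: n_def card_mono)
    qed (auto simp: not_le binomial_eq_0)
    finally show ?thesis by (simp add: G_def sum_distrib_left mult_ac)
  qed
  have coeff: "(\<Sum>K\<in>{K. K \<subseteq> S \<and> card K = i}. \<Sum>I\<in>Pow (S - K). G I (card (S - K - I)))
      = (if i = n then 1 else 0)" for i
    unfolding G_def n_def by (rule sum_card_subsets_abel_poly_alternating[OF S])
  have "(\<Sum>I\<in>Pow S. abel_poly t x I * (y + weight t (S - I)) ^ card (S - I))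
      = (\<Sum>i\<le>n. W ^ i * (\<Sum>I\<in>Pow S. of_nat (card (S - I) choose i) * G I (card (S - I) - i)))"
    by (simp add: expand sum.swap[of _ "Pow S"] sum_distrib_left)
  also have "\<dots> = (\<Sum>i\<le>n. if i = n then W ^ i else 0)"
    by (intro sum.cong refl) (simp add: sum_Pow_choose_card_Diff[OF S] coeff)
  also have "\<dots> = W ^ n" by simp
  finally show ?thesis by (simp add: W_def n_def)
qed

definition subset_conv :: "('b set \<Rightarrow> 'a::comm_semiring_1) \<Rightarrow> ('b set \<Rightarrow> 'a) \<Rightarrow> 'b set \<Rightarrow> 'a" where
  "subset_conv f g S = (\<Sum>I\<in>Pow S. f I * g (S - I))"

lemma subset_conv_cong: "(\<And>J. J \<subseteq> S \<Longrightarrow> g J = g' J) \<Longrightarrow> subset_conv f g S = subset_conv f g' S"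
  unfolding subset_conv_def by (intro sum.cong) auto

lemma subset_conv_assoc:
  assumes S: "finite S"
  shows "subset_conv f (subset_conv g h) S = subset_conv (subset_conv f g) h S"
proof -
  have Diff_eqs: "b - a = b" "S - a - b = S - (a \<union> b)" if "b \<subseteq> S - a" for a b
    using that by auto
  have "subset_conv f (subset_conv g h) S
      = (\<Sum>(I, A)\<in>Sigma (Pow S) (\<lambda>I. Pow (S - I)). f I * g A * h (S - I - A))"
    using S by (simp add: subset_conv_def sum_distrib_left mult_ac sum.Sigma)
  also have "\<dots> = (\<Sum>(L, I)\<in>Sigma (Pow S) Pow. f I * g (L - I) * h (S - L))"
    by (rule sum.reindex_bij_witness[where i="\<lambda>(L, I). (I, L - I)" and j="\<lambda>(I, A). (I \<union> A, I)"])
      (auto simp: Diff_eqs Un_Diff simp del: Diff_Un)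
  also have "\<dots> = subset_conv (subset_conv f g) h S"
    using S by (simp add: subset_conv_def sum_distrib_right sum.Sigma finite_subset)
  finally show ?thesis .
qed

lemma subset_conv_cancel_right:
  fixes f g q :: "'b set \<Rightarrow> 'a::comm_ring_1"
  assumes "finite S" "q {} = 1" "\<And>S'. S' \<subseteq> S \<Longrightarrow> subset_conv f q S' = subset_conv g q S'"
  shows "f S = g S"
  using assms
proof (induction "card S" arbitrary: S rule: less_induct)
  case less
  have split: "subset_conv h q S = h S + (\<Sum>I\<in>Pow S - {S}. h I * q (S - I))" for h
    unfolding subset_conv_def using less.prems by (subst sum.remove[of _ S]) auto
  have "f I = g I" if "I \<in> Pow S - {S}" for I
  proof -
    have "I \<subset> S" using that by auto
    moreover have "finite I" using that less.prems(1) finite_subset by blast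
    ultimately show ?thesis
      using less.hyps[of I] less.prems(1,2,3) by (simp add: psubset_card_mono)
  qed
  then have "(\<Sum>I\<in>Pow S - {S}. f I * q (S - I)) = (\<Sum>I\<in>Pow S - {S}. g I * q (S - I))"
    by simp
  then show ?case using less.prems(3)[of S] by (simp add: split)
qed

text \<open>Both sides convolved with \<open>I \<mapsto> t\<^sub>I\<^bsup>|I|\<^esup>\<close> give \<open>(x + y + t\<^sub>S)\<^bsup>|S|\<^esup>\<close>.\<close>

lemma abel_identity:
  fixes t :: "'b \<Rightarrow> 'a::comm_ring_1"
  assumes S: "finite S"
  shows "(\<Sum>I\<in>Pow S. abel_poly t x I * abel_poly t y (S - I)) = abel_poly t (x + y) S"
proof -
  define q where "q = (\<lambda>B. weight t B ^ card B)"
  have conv_q: "subset_conv (abel_poly t y) q J = (y + weight t J) ^ card J" if "finite J" for J y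
    using abel_identity_power[OF that, of t y 0] by (simp add: subset_conv_def q_def)
  have conv_eq: "subset_conv (subset_conv (abel_poly t x) (abel_poly t y)) q S'
      = subset_conv (abel_poly t (x + y)) q S'" if "S' \<subseteq> S" for S'
  proof -
    have S': "finite S'" using that S finite_subset by auto
    have "subset_conv (subset_conv (abel_poly t x) (abel_poly t y)) q S'
        = subset_conv (abel_poly t x) (\<lambda>J. (y + weight t J) ^ card J) S'"
      using S' by (simp add: subset_conv_assoc[symmetric] conv_q finite_subset cong: subset_conv_cong)
    also have "\<dots> = (x + y + weight t S') ^ card S'"
      using abel_identity_power[OF S', of t x y] by (simp add: subset_conv_def)
    also have "\<dots> = subset_conv (abel_poly t (x + y)) q S'" using conv_q[OF S'] by simp
    finally show ?thesis .
  qed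
  have "subset_conv (abel_poly t x) (abel_poly t y) S = abel_poly t (x + y) S"
    by (rule subset_conv_cancel_right[OF S _ conv_eq]) (simp add: q_def)
  then show ?thesis by (simp add: subset_conv_def)
qed

lemma abel_identity_family:
  fixes t :: "'b \<Rightarrow> 'a::comm_ring_1"
  assumes S: "finite S" and P: "finite P" and D: "\<And>p. p \<in> P \<Longrightarrow> D p \<subseteq> S"
  shows "(\<Sum>I\<in>Pow S. abel_poly t x I *
            (\<Sum>p\<in>{p \<in> P. D p \<inter> I = {}}. g p * abel_poly t (c p) (S - I - D p)))
       = (\<Sum>p\<in>P. g p * abel_poly t (x + c p) (S - D p))"
proof -
  have Diff_swap: "S - I - D p = S - D p - I" for I p by blast
  have "(\<Sum>I\<in>Pow S. abel_poly t x I *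
            (\<Sum>p\<in>{p \<in> P. D p \<inter> I = {}}. g p * abel_poly t (c p) (S - I - D p)))
      = (\<Sum>p\<in>P. \<Sum>I\<in>{I \<in> Pow S. D p \<inter> I = {}}.
            g p * (abel_poly t x I * abel_poly t (c p) (S - D p - I)))"
    using sum.swap_restrict[of "Pow S" P, OF _ P] S
    by (simp add: sum_distrib_left Diff_swap mult_ac)
  also have "\<dots> = (\<Sum>p\<in>P. g p * abel_poly t (x + c p) (S - D p))"
  proof (rule sum.cong[OF refl])
    fix p assume "p \<in> P"
    then have "{I \<in> Pow S. D p \<inter> I = {}} = Pow (S - D p)" using D by auto
    then show "(\<Sum>I\<in>{I \<in> Pow S. D p \<inter> I = {}}.
            g p * (abel_poly t x I * abel_poly t (c p) (S - D p - I)))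
        = g p * abel_poly t (x + c p) (S - D p)"
      using S by (simp add: abel_identity sum_distrib_left[symmetric])
  qed
  finally show ?thesis .
qed

text \<open>By Cayley's formula, \<open>(\<Prod>i\<in>I. t i) * cayley t I\<close> is the generating function of the
  trees on \<open>I\<close> in which each vertex \<open>i\<close> has weight \<open>t i\<close> raised to its degree.\<close>

definition cayley :: "('b \<Rightarrow> 'a::field) \<Rightarrow> 'b set \<Rightarrow> 'a" where
  "cayley t I = weight t I powi (int (card I) - 2)"

definition off_diag :: "'b set \<Rightarrow> ('b \<times> 'b) set" where
  "off_diag J = Sigma J (\<lambda>a. J - {a})"

lemma finite_off_diag: "finite J \<Longrightarrow> finite (off_diag J)"
  by (simp add: off_diag_def)

lemma card_off_diag: "finite J \<Longrightarrow> card (off_diag J) = card J * (card J - 1)"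
  by (simp add: off_diag_def card_SigmaI)

lemma off_diag_Diff: "off_diag (S - I) = {p \<in> off_diag S. (case p of (a, b) \<Rightarrow> {a, b}) \<inter> I = {}}"
  by (auto simp: off_diag_def)

lemma sum_off_diag_linear:
  fixes t :: "'b \<Rightarrow> 'a::comm_ring_1"
  assumes J: "finite J"
  shows "(\<Sum>(a, b)\<in>off_diag J. c + (t a + t b))
       = of_nat (card J * (card J - 1)) * c + 2 * of_nat (card J - 1) * weight t J"
proof -
  have "(\<Sum>(a, b)\<in>off_diag J. c + (t a + t b)) = (\<Sum>a\<in>J. \<Sum>b\<in>J - {a}. c + t a + t b)"
    unfolding off_diag_def using J by (simp add: sum.Sigma add.assoc)
  also have "\<dots> = (\<Sum>a\<in>J. of_nat (card J - 1) * (c + t a) + (weight t J - t a))"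
    using J by (intro sum.cong refl) (simp add: sum.distrib weight_def sum_diff1 algebra_simps)
  also have "\<dots> = of_nat (card J) * (of_nat (card J - 1) * c)
      + of_nat (card J - 1) * weight t J + (of_nat (card J) * weight t J - weight t J)"
    by (simp add: sum.distrib sum_subtractf sum_distrib_left sum_distrib_right weight_def algebra_simps)
  also have "\<dots> = of_nat (card J * (card J - 1)) * c + 2 * of_nat (card J - 1) * weight t J"
    using J by (cases "card J") (simp_all add: weight_def algebra_simps)
  finally show ?thesis .
qed

lemma abel_poly_remove:
  fixes t :: "'b \<Rightarrow> 'a::field"
  assumes J: "finite J" "a \<in> J" and nondeg: "card J \<ge> 2 \<or> c + weight t J \<noteq> 0"
  shows "abel_poly t (c + t a) (J - {a}) = (c + t a) * (c + weight t J) powi (int (card J) - 2)"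
proof (cases "J - {a} = {}")
  case True
  then have "J = {a}" using J by auto
  then show ?thesis using nondeg by (simp add: abel_poly_def weight_def power_int_minus)
next
  case False
  then have "card (J - {a}) \<noteq> 0" using J by (meson card_0_eq finite_Diff)
  then have "card J \<ge> 2" using J by (simp add: card_Diff_singleton)
  then have "int (card J) - 2 = int (card (J - {a}) - 1)" using J by simp
  then show ?thesis
    using False weight_remove[OF J, of t] by (simp add: abel_poly_def add.assoc)
qed

lemma abel_poly_remove2:
  fixes t :: "'b \<Rightarrow> 'a::field"
  assumes J: "finite J" "a \<in> J" "b \<in> J" "a \<noteq> b" and nondeg: "card J \<ge> 3 \<or> c + weight t J \<noteq> 0"
  shows "abel_poly t (c + (t a + t b)) (J - {a, b})
       = (c + (t a + t b)) * (c + weight t J) powi (int (card J) - 3)"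
proof (cases "J - {a, b} = {}")
  case True
  then have "J = {a, b}" using J by auto
  then show ?thesis using nondeg J by (simp add: abel_poly_def weight_def power_int_minus add.assoc)
next
  case False
  have card_Diff: "card (J - {a, b}) = card J - 2" using J by (simp add: card_Diff_subset)
  have "card (J - {a, b}) \<noteq> 0" using False J by (simp del: card_Diff_insert)
  then have "card J \<ge> 3" using card_Diff by linarith
  then have "int (card J) - 3 = int (card (J - {a, b}) - 1)" using card_Diff by simp
  then show ?thesis
    using False weight_remove2[OF J, of t] by (simp add: abel_poly_def add.assoc)
qed

lemma cayley_root:
  fixes t :: "'b \<Rightarrow> 'a::field"
  assumes I: "finite I" "e \<in> I" and nz: "t e \<noteq> 0"
  shows "t e * cayley t I = abel_poly t (t e) (I - {e})"
proof -
  have "card I \<ge> 2 \<or> 0 + weight t I \<noteq> 0"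
  proof (cases "I = {e}")
    case True
    then show ?thesis using nz by (simp add: weight_def)
  next
    case False
    then have "I - {e} \<noteq> {}" using I by auto
    then have "card (I - {e}) > 0" using I by (simp only: card_gt_0_iff finite_Diff simp_thms)
    then show ?thesis using I by (simp add: card_Diff_singleton)
  qed
  then show ?thesis using abel_poly_remove[OF I, of 0 t] by (simp add: cayley_def)
qed

lemma sum_off_diag_abel_poly:
  fixes t :: "'b \<Rightarrow> 'a::field"
  assumes J: "finite J"
  shows "(\<Sum>(a, b)\<in>off_diag J. abel_poly t (t a + t b) (J - {a, b}))
       = 2 * of_nat (card J - 1) * cayley t J"
proof -
  consider "card J \<le> 1" | "card J = 2" | "card J \<ge> 3" by linarith
  then show ?thesis
  proof cases
    case 1
    then have "off_diag J = {}" using card_off_diag[OF J] finite_off_diag[OF J] by simp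
    then show ?thesis using 1 by simp
  next
    case 2
    have "(\<Sum>(a, b)\<in>off_diag J. abel_poly t (t a + t b) (J - {a, b})) = (\<Sum>p\<in>off_diag J. 1)"
    proof (intro sum.cong refl)
      fix p assume "p \<in> off_diag J"
      then obtain a b where "p = (a, b)" "a \<in> J" "b \<in> J" "a \<noteq> b" by (auto simp: off_diag_def)
      moreover have "J - {a, b} = {}"
        using calculation 2 J card_subset_eq[of J "{a, b}"] by auto
      ultimately show "(case p of (a, b) \<Rightarrow> abel_poly t (t a + t b) (J - {a, b})) = 1"
        by (simp add: abel_poly_def)
    qed
    then show ?thesis using 2 J by (simp add: card_off_diag cayley_def)
  next
    case 3
    have "(\<Sum>(a, b)\<in>off_diag J. abel_poly t (t a + t b) (J - {a, b}))
        = (\<Sum>(a, b)\<in>off_diag J. (0 + (t a + t b)) * weight t J powi (int (card J) - 3))"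
    proof (intro sum.cong refl)
      fix p assume "p \<in> off_diag J"
      then obtain a b where "p = (a, b)" "a \<in> J" "b \<in> J" "a \<noteq> b" by (auto simp: off_diag_def)
      then show "(case p of (a, b) \<Rightarrow> abel_poly t (t a + t b) (J - {a, b}))
          = (case p of (a, b) \<Rightarrow> (0 + (t a + t b)) * weight t J powi (int (card J) - 3))"
        using abel_poly_remove2[OF J, of a b 0 t] 3 by simp
    qed
    also have "\<dots> = 2 * of_nat (card J - 1) * weight t J * weight t J powi (int (card J) - 3)"
      using sum_off_diag_linear[OF J, of 0 t] by (simp add: sum_distrib_right[symmetric] split_def)
    also have "\<dots> = 2 * of_nat (card J - 1) * cayley t J"
      using 3 power_int_add[of "weight t J" 1 "int (card J) - 3"]
      by (simp add: cayley_def mult.assoc)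
    finally show ?thesis .
  qed
qed

text \<open>A linear expression of \<open>t\<^sub>J\<^bsup>|J|-2\<^esup>\<close> in Abel polynomials, so that Abel's identity
  evaluates its convolutions.\<close>

definition abel_expansion :: "('b \<Rightarrow> 'a::field) \<Rightarrow> 'b set \<Rightarrow> 'a" where
  "abel_expansion t J = (\<Sum>b\<in>J. abel_poly t (t b) (J - {b}) / t b)
      - (\<Sum>(a, b)\<in>off_diag J. abel_poly t (t a + t b) (J - {a, b})) / 2"

lemma cayley_eq_abel_expansion:
  fixes t :: "'b \<Rightarrow> 'a::field_char_0"
  assumes J: "finite J" "J \<noteq> {}" and nz: "\<And>b. b \<in> J \<Longrightarrow> t b \<noteq> 0"
  shows "cayley t J = abel_expansion t J"
proof -
  have "(\<Sum>b\<in>J. abel_poly t (t b) (J - {b}) / t b) = (\<Sum>b\<in>J. cayley t J)"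
    using nz by (intro sum.cong refl) (simp add: cayley_root[OF J(1), symmetric])
  moreover obtain k where "card J = Suc k" using J by (cases "card J") auto
  ultimately show ?thesis
    unfolding abel_expansion_def sum_off_diag_abel_poly[OF J(1)] by (simp add: algebra_simps)
qed

lemma abel_identity_abel_expansion:
  fixes t :: "'b \<Rightarrow> 'a::field"
  assumes S: "finite S"
  shows "(\<Sum>I\<in>Pow S. abel_poly t x I * abel_expansion t (S - I))
       = (\<Sum>b\<in>S. abel_poly t (x + t b) (S - {b}) / t b)
         - (\<Sum>(a, b)\<in>off_diag S. abel_poly t (x + (t a + t b)) (S - {a, b})) / 2"
proof -
  have singletons: "(\<Sum>I\<in>Pow S. abel_poly t x I *
        (\<Sum>b\<in>{b \<in> S. {b} \<inter> I = {}}. 1 / t b * abel_poly t (t b) (S - I - {b})))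
      = (\<Sum>b\<in>S. 1 / t b * abel_poly t (x + t b) (S - {b}))"
    by (rule abel_identity_family[OF S S]) simp
  have pairs: "(\<Sum>I\<in>Pow S. abel_poly t x I *
        (\<Sum>p\<in>{p \<in> off_diag S. (case p of (a, b) \<Rightarrow> {a, b}) \<inter> I = {}}.
          1 * abel_poly t (case p of (a, b) \<Rightarrow> t a + t b) (S - I - (case p of (a, b) \<Rightarrow> {a, b}))))
      = (\<Sum>p\<in>off_diag S. 1 * abel_poly t (x + (case p of (a, b) \<Rightarrow> t a + t b))
          (S - (case p of (a, b) \<Rightarrow> {a, b})))"
    by (rule abel_identity_family[OF S finite_off_diag[OF S]]) (auto simp: off_diag_def)
  have "{b \<in> S. {b} \<inter> I = {}} = S - I" for I by auto
  then have "(\<Sum>I\<in>Pow S. abel_poly t x I * abel_expansion t (S - I))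
      = (\<Sum>I\<in>Pow S. abel_poly t x I *
          (\<Sum>b\<in>{b \<in> S. {b} \<inter> I = {}}. 1 / t b * abel_poly t (t b) (S - I - {b})))
      - (\<Sum>I\<in>Pow S. abel_poly t x I *
          (\<Sum>p\<in>{p \<in> off_diag S. (case p of (a, b) \<Rightarrow> {a, b}) \<inter> I = {}}.
            1 * abel_poly t (case p of (a, b) \<Rightarrow> t a + t b) (S - I - (case p of (a, b) \<Rightarrow> {a, b})))) / 2"
    by (simp add: abel_expansion_def off_diag_Diff split_def right_diff_distrib sum_subtractf
        sum_divide_distrib sum_distrib_left)
  then show ?thesis unfolding singletons pairs by (simp add: split_def)
qed

lemma sum_proper_subsets_pointed:
  fixes g :: "'b set \<Rightarrow> 'a::comm_semiring_1"
  assumes M: "finite M" and e: "e \<in> M"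
  shows "(\<Sum>I\<in>Pow M - {{}, M}. g I * g (M - I))
       = 2 * (\<Sum>I\<in>{I \<in> Pow M. e \<in> I \<and> I \<noteq> M}. g I * g (M - I))"
proof -
  define A where "A = {I \<in> Pow M. e \<in> I \<and> I \<noteq> M}"
  have split: "Pow M - {{}, M} = A \<union> (\<lambda>I. M - I) ` A"
  proof (intro equalityI subsetI)
    fix I assume I: "I \<in> Pow M - {{}, M}"
    show "I \<in> A \<union> (\<lambda>I. M - I) ` A"
    proof (cases "e \<in> I")
      case False
      then have "M - I \<in> A" "I = M - (M - I)" using I e by (auto simp: A_def)
      then show ?thesis by blast
    qed (use I in \<open>auto simp: A_def\<close>)
  qed (use e in \<open>auto simp: A_def\<close>)
  have inj: "inj_on (\<lambda>I. M - I) A" unfolding inj_on_def A_def by blast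
  have "(\<Sum>I\<in>(\<lambda>I. M - I) ` A. g I * g (M - I)) = (\<Sum>I\<in>A. g I * g (M - I))"
    by (simp add: sum.reindex[OF inj]) (intro sum.cong refl, auto simp: A_def double_diff mult.commute)
  moreover have "A \<inter> (\<lambda>I. M - I) ` A = {}" by (auto simp: A_def)
  ultimately show ?thesis
    unfolding split using M by (simp add: sum.union_disjoint A_def mult_2)
qed

lemma pointed_sum_cayley:
  fixes t :: "'b \<Rightarrow> 'a::field_char_0"
  assumes M: "finite M" "e \<in> M" and nz: "\<And>i. i \<in> M \<Longrightarrow> t i \<noteq> 0"
  defines "S \<equiv> M - {e}"
  shows "t e * (\<Sum>I\<in>{I \<in> Pow M. e \<in> I \<and> I \<noteq> M}. cayley t I * cayley t (M - I))
       = (\<Sum>b\<in>S. abel_poly t (t e + t b) (S - {b}) / t b)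
         - (\<Sum>(a, b)\<in>off_diag S. abel_poly t (t e + (t a + t b)) (S - {a, b})) / 2"
proof -
  have S: "finite S" using M by (simp add: S_def)
  have "{I \<in> Pow M. e \<in> I \<and> I \<noteq> M} = insert e ` (Pow S - {S})"
  proof (intro equalityI subsetI)
    fix I assume "I \<in> {I \<in> Pow M. e \<in> I \<and> I \<noteq> M}"
    then have "I = insert e (I - {e})" "I - {e} \<in> Pow S - {S}" using M by (auto simp: S_def)
    then show "I \<in> insert e ` (Pow S - {S})" by blast
  qed (use M in \<open>auto simp: S_def\<close>)
  moreover have "inj_on (insert e) (Pow S - {S})" unfolding inj_on_def S_def by blast
  ultimately have "t e * (\<Sum>I\<in>{I \<in> Pow M. e \<in> I \<and> I \<noteq> M}. cayley t I * cayley t (M - I))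
      = (\<Sum>J\<in>Pow S - {S}. t e * cayley t (insert e J) * cayley t (M - insert e J))"
    by (simp add: sum.reindex sum_distrib_left mult.assoc)
  also have "\<dots> = (\<Sum>J\<in>Pow S - {S}. abel_poly t (t e) J * cayley t (S - J))"
  proof (intro sum.cong refl)
    fix J assume J: "J \<in> Pow S - {S}"
    have "finite (insert e J)" "insert e J - {e} = J" using J S finite_subset by (auto simp: S_def)
    then have "t e * cayley t (insert e J) = abel_poly t (t e) J"
      using cayley_root[of "insert e J" e t] nz M by simp
    moreover have "M - insert e J = S - J" by (auto simp: S_def)
    ultimately show "t e * cayley t (insert e J) * cayley t (M - insert e J)
        = abel_poly t (t e) J * cayley t (S - J)" by simp
  qed
  also have "\<dots> = (\<Sum>J\<in>Pow S. abel_poly t (t e) J * abel_expansion t (S - J))"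
  proof -
    have "abel_expansion t {} = 0" by (simp add: abel_expansion_def off_diag_def)
    moreover have "cayley t (S - J) = abel_expansion t (S - J)" if "J \<in> Pow S - {S}" for J
      using that S nz by (intro cayley_eq_abel_expansion) (auto simp: S_def)
    ultimately show ?thesis using S by (simp add: sum.remove[of "Pow S" S])
  qed
  also have "\<dots> = (\<Sum>b\<in>S. abel_poly t (t e + t b) (S - {b}) / t b)
      - (\<Sum>(a, b)\<in>off_diag S. abel_poly t (t e + (t a + t b)) (S - {a, b})) / 2"
    by (rule abel_identity_abel_expansion[OF S])
  finally show ?thesis .
qed

lemma abel_expansion_shifted_eval:
  fixes t :: "'b \<Rightarrow> 'a::field_char_0"
  assumes S: "finite S" and nz: "\<And>b. b \<in> S \<Longrightarrow> t b \<noteq> 0"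
    and nondeg: "card S \<ge> 3 \<or> x + weight t S \<noteq> 0"
  defines "n \<equiv> card S" and "T \<equiv> x + weight t S"
  shows "(\<Sum>b\<in>S. abel_poly t (x + t b) (S - {b}) / t b)
         - (\<Sum>(a, b)\<in>off_diag S. abel_poly t (x + (t a + t b)) (S - {a, b})) / 2
       = T powi (int n - 2) * (x * (\<Sum>b\<in>S. 1 / t b) + of_nat n)
         - T powi (int n - 3) * (of_nat (n * (n - 1)) * x + 2 * of_nat (n - 1) * weight t S) / 2"
proof -
  have "(\<Sum>b\<in>S. abel_poly t (x + t b) (S - {b}) / t b)
      = (\<Sum>b\<in>S. T powi (int n - 2) * (x * (1 / t b) + 1))"
  proof (intro sum.cong refl)
    fix b assume "b \<in> S"
    moreover have "card S \<ge> 2 \<or> x + weight t S \<noteq> 0" using nondeg by linarith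
    ultimately show "abel_poly t (x + t b) (S - {b}) / t b = T powi (int n - 2) * (x * (1 / t b) + 1)"
      using abel_poly_remove[OF S, of b x t] nz[of b] by (simp add: T_def n_def field_simps)
  qed
  also have "\<dots> = T powi (int n - 2) * (\<Sum>b\<in>S. x * (1 / t b) + 1)"
    by (simp only: sum_distrib_left)
  also have "\<dots> = T powi (int n - 2) * (x * (\<Sum>b\<in>S. 1 / t b) + of_nat n)"
    by (simp only: sum.distrib sum_distrib_left[symmetric]) (simp add: n_def)
  finally have singles: "(\<Sum>b\<in>S. abel_poly t (x + t b) (S - {b}) / t b)
      = T powi (int n - 2) * (x * (\<Sum>b\<in>S. 1 / t b) + of_nat n)" .
  have "(\<Sum>(a, b)\<in>off_diag S. abel_poly t (x + (t a + t b)) (S - {a, b}))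
      = (\<Sum>(a, b)\<in>off_diag S. (x + (t a + t b)) * T powi (int n - 3))"
  proof (intro sum.cong refl)
    fix p assume "p \<in> off_diag S"
    then obtain a b where "p = (a, b)" "a \<in> S" "b \<in> S" "a \<noteq> b" by (auto simp: off_diag_def)
    then show "(case p of (a, b) \<Rightarrow> abel_poly t (x + (t a + t b)) (S - {a, b}))
        = (case p of (a, b) \<Rightarrow> (x + (t a + t b)) * T powi (int n - 3))"
      using abel_poly_remove2[OF S, of a b x t] nondeg by (simp add: T_def n_def)
  qed
  also have "\<dots> = T powi (int n - 3) * (of_nat (n * (n - 1)) * x + 2 * of_nat (n - 1) * weight t S)"
    using sum_off_diag_linear[OF S, of x t]
    by (simp add: sum_distrib_right[symmetric] split_def n_def mult.commute)
  finally show ?thesis using singles by simp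
qed

theorem sum_complementary_cayley:
  fixes t :: "'b \<Rightarrow> 'a::field_char_0"
  assumes M: "finite M" "card M \<ge> 2" and nz: "\<And>i. i \<in> M \<Longrightarrow> t i \<noteq> 0"
    and nondeg: "card M < 4 \<Longrightarrow> weight t M \<noteq> 0"
  shows "(\<Sum>I\<in>Pow M - {{}, M}. cayley t I * cayley t (M - I))
       = weight t M powi (int (card M) - 4) *
         (2 * weight t M * (\<Sum>i\<in>M. 1 / t i) - of_int ((int (card M) - 2) * (int (card M) - 3)))"
proof -
  obtain e where e: "e \<in> M" using M by fastforce
  define S where "S = M - {e}"
  define x where "x = t e"
  define n where "n = card S"
  define T where "T = weight t M"
  define P where "P = T powi (int n - 3)"
  have S: "finite S" using M by (simp add: S_def)
  have card_M: "card M = Suc n" and n: "n \<ge> 1" using M e by (simp_all add: S_def n_def)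
  have x: "x \<noteq> 0" using nz e by (simp add: x_def)
  have nz_S: "\<And>b. b \<in> S \<Longrightarrow> t b \<noteq> 0" using nz by (simp add: S_def)
  have T: "T = x + weight t S" using weight_remove[OF M(1) e] by (simp add: T_def S_def x_def)
  have nondeg_S: "card S \<ge> 3 \<or> x + weight t S \<noteq> 0" using nondeg card_M T by (auto simp: n_def T_def)
  have T_powi: "T powi (int n - 2) = T * P"
    using power_int_add[of T 1 "int n - 3"] nondeg_S T by (auto simp: P_def n_def)
  have "(\<Sum>I\<in>Pow M - {{}, M}. cayley t I * cayley t (M - I))
      = 2 * ((\<Sum>b\<in>S. abel_poly t (x + t b) (S - {b}) / t b)
          - (\<Sum>(a, b)\<in>off_diag S. abel_poly t (x + (t a + t b)) (S - {a, b})) / 2) / x"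
  proof -
    have "x * (\<Sum>I\<in>{I \<in> Pow M. e \<in> I \<and> I \<noteq> M}. cayley t I * cayley t (M - I))
        = (\<Sum>b\<in>S. abel_poly t (x + t b) (S - {b}) / t b)
          - (\<Sum>(a, b)\<in>off_diag S. abel_poly t (x + (t a + t b)) (S - {a, b})) / 2"
      (is "x * ?Q = ?L")
      using pointed_sum_cayley[OF M(1) e nz] by (simp only: S_def x_def)
    then have "?Q = ?L / x" using x by (simp add: eq_divide_eq mult.commute)
    then show ?thesis
      using sum_proper_subsets_pointed[OF M(1) e, of "cayley t"] by simp
  qed
  also have "\<dots> = 2 * (T * P * (x * (\<Sum>b\<in>S. 1 / t b) + of_nat n)
      - P * (of_nat (n * (n - 1)) * x + 2 * of_nat (n - 1) * weight t S) / 2) / x"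
    using abel_expansion_shifted_eval[OF S nz_S nondeg_S]
    by (simp only: T[symmetric] n_def[symmetric] T_powi P_def[symmetric])
  also have "\<dots> = P * (2 * T * (1 / x + (\<Sum>b\<in>S. 1 / t b)) - (of_nat n - 1) * (of_nat n - 2))"
    using x n by (simp add: of_nat_diff T field_simps)
  also have "\<dots> = T powi (int (card M) - 4) *
      (2 * T * (\<Sum>i\<in>M. 1 / t i) - of_int ((int (card M) - 2) * (int (card M) - 3)))"
    using M e by (simp add: card_M P_def sum.remove[of M e] S_def x_def algebra_simps)
  finally show ?thesis by (simp add: T_def)
qed

lemma sum_set_splittings_cayley:
  fixes t :: "'b \<Rightarrow> 'a::field_char_0"
  assumes M: "finite M" "card M \<ge> 2" and nz: "\<And>i. i \<in> M \<Longrightarrow> t i \<noteq> 0"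
    and nondeg: "card M < 4 \<Longrightarrow> (\<Sum>i\<in>M. t i) \<noteq> 0"
  shows "(\<Sum>(I, J)\<in>{(I, J). I \<union> J = M \<and> I \<inter> J = {} \<and> I \<noteq> {} \<and> J \<noteq> {}}.
          (\<Sum>i\<in>I. t i) powi (int (card I) - 2) * (\<Sum>j\<in>J. t j) powi (int (card J) - 2))
       = (\<Sum>i\<in>M. t i) powi (int (card M) - 4) *
         (2 * (\<Sum>i\<in>M. t i) * (\<Sum>i\<in>M. 1 / t i) - of_int ((int (card M) - 2) * (int (card M) - 3)))"
proof -
  have "{(I, J). I \<union> J = M \<and> I \<inter> J = {} \<and> I \<noteq> {} \<and> J \<noteq> {}} = (\<lambda>I. (I, M - I)) ` (Pow M - {{}, M})"
    by auto
  moreover have "inj_on (\<lambda>I. (I, M - I)) (Pow M - {{}, M})" by (auto simp: inj_on_def)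
  ultimately show ?thesis
    using sum_complementary_cayley[OF M nz] nondeg by (simp add: sum.reindex cayley_def weight_def)
qed

definition splittings :: "'a multiset \<Rightarrow> ('a multiset \<times> 'a multiset) set" where
  "splittings K = {(A, B). A + B = K}"

lemma splittings_add_mset_left:
  "{(A, B) \<in> splittings (add_mset x K). x \<in># A} = (\<lambda>(A, B). (add_mset x A, B)) ` splittings K"
proof (intro equalityI subsetI)
  fix p assume "p \<in> {(A, B) \<in> splittings (add_mset x K). x \<in># A}"
  then obtain A B where p: "p = (A, B)" "A + B = add_mset x K" "x \<in># A" by (auto simp: splittings_def)
  then have "add_mset x (A - {#x#}) + B = add_mset x K" by simp
  then have "(A - {#x#}) + B = K" by simp
  then show "p \<in> (\<lambda>(A, B). (add_mset x A, B)) ` splittings K"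
    using p by (auto simp: splittings_def image_iff intro!: exI[of _ "A - {#x#}"])
qed (auto simp: splittings_def)

lemma splittings_add_mset_right:
  "{(A, B) \<in> splittings (add_mset x K). x \<in># B} = (\<lambda>(A, B). (A, add_mset x B)) ` splittings K"
proof (intro equalityI subsetI)
  fix p assume "p \<in> {(A, B) \<in> splittings (add_mset x K). x \<in># B}"
  then obtain A B where p: "p = (A, B)" "A + B = add_mset x K" "x \<in># B" by (auto simp: splittings_def)
  then have "A + add_mset x (B - {#x#}) = add_mset x K" by simp
  then have "A + (B - {#x#}) = K" by simp
  then show "p \<in> (\<lambda>(A, B). (A, add_mset x B)) ` splittings K"
    using p by (auto simp: splittings_def image_iff intro!: exI[of _ "B - {#x#}"])
qed (auto simp: splittings_def)

lemma finite_splittings: "finite (splittings (K :: 'a multiset))"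
proof (induction K)
  case empty
  have "splittings ({#} :: 'a multiset) = {({#}, {#})}" by (auto simp: splittings_def)
  then show ?case by simp
next
  case (add x K)
  have "splittings (add_mset x K) \<subseteq> {(A, B) \<in> splittings (add_mset x K). x \<in># A}
      \<union> {(A, B) \<in> splittings (add_mset x K). x \<in># B}"
    by (force simp: splittings_def dest: arg_cong[where f="\<lambda>M. x \<in># M"])
  then show ?case
    unfolding splittings_add_mset_left splittings_add_mset_right using add
    by (meson finite_Un finite_imageI finite_subset)
qed

lemma aut_add_mset: "aut (add_mset x K) = aut K * (count K x + 1)"
proof (cases "x \<in># K")
  case True
  have "aut (add_mset x K) = fact (count K x + 1) * (\<Prod>y\<in>set_mset K - {x}. fact (count K y))"
    using True by (simp add: aut_def insert_absorb prod.remove[of _ x])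
  also have "\<dots> = (count K x + 1) * aut K"
    unfolding aut_def using True by (simp add: prod.remove[of _ x] algebra_simps)
  finally show ?thesis by simp
next
  case False
  then have "aut (add_mset x K)
      = fact (count (add_mset x K) x) * (\<Prod>y\<in>set_mset K. fact (count (add_mset x K) y))"
    by (simp add: aut_def)
  also have "(\<Prod>y\<in>set_mset K. fact (count (add_mset x K) y)) = aut K"
    unfolding aut_def using False by (intro prod.cong) auto
  finally show ?thesis using False by (simp add: not_in_iff)
qed

lemma aut_pos: "aut K > 0"
  unfolding aut_def by (simp add: prod_pos)

text \<open>\<open>split_coeff K A B\<close> is the number of ways to distribute the parts of \<open>K\<close>, viewed as
  distinguishable, into \<open>A\<close> and \<open>B\<close>.\<close>

definition split_coeff :: "nat multiset \<Rightarrow> nat multiset \<Rightarrow> nat multiset \<Rightarrow> real" where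
  "split_coeff K A B = real (aut K) / (real (aut A) * real (aut B))"

lemma split_coeff_add_mset:
  assumes "A + B = add_mset x K"
  shows "split_coeff (add_mset x K) A B
       = (if x \<in># A then split_coeff K (A - {#x#}) B else 0)
         + (if x \<in># B then split_coeff K A (B - {#x#}) else 0)"
proof -
  define a where "a = count A x"
  define b where "b = count B x"
  have ab: "a + b = count K x + 1"
    using arg_cong[OF assms, of "\<lambda>M. count M x"] by (simp add: a_def b_def)
  have pos: "real (aut A) > 0" "real (aut B) > 0" using aut_pos by auto
  have left: "(if x \<in># A then split_coeff K (A - {#x#}) B else 0)
      = real (aut K) * a / (real (aut A) * real (aut B))"
  proof (cases "x \<in># A")
    case True
    then have "aut A = aut (A - {#x#}) * a" using aut_add_mset[of x "A - {#x#}"] by (simp add: a_def)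
    moreover have "a > 0" using True by (simp add: a_def)
    ultimately show ?thesis using True pos by (simp add: split_coeff_def field_simps)
  qed (simp add: a_def count_eq_zero_iff)
  have right: "(if x \<in># B then split_coeff K A (B - {#x#}) else 0)
      = real (aut K) * b / (real (aut A) * real (aut B))"
  proof (cases "x \<in># B")
    case True
    then have "aut B = aut (B - {#x#}) * b" using aut_add_mset[of x "B - {#x#}"] by (simp add: b_def)
    moreover have "b > 0" using True by (simp add: b_def)
    ultimately show ?thesis using True pos by (simp add: split_coeff_def field_simps)
  qed (simp add: b_def count_eq_zero_iff)
  have "split_coeff (add_mset x K) A B = real (aut K) * (a + b) / (real (aut A) * real (aut B))"
    unfolding split_coeff_def aut_add_mset ab by (simp add: algebra_simps)
  then show ?thesis unfolding left right by (simp add: add_divide_distrib distrib_left)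
qed

lemma sum_splittings_add_mset:
  "(\<Sum>(A, B)\<in>splittings (add_mset x K). F A B * split_coeff (add_mset x K) A B)
   = (\<Sum>(A, B)\<in>splittings K. (F (add_mset x A) B + F A (add_mset x B)) * split_coeff K A B)"
proof -
  have left: "(\<Sum>(A, B)\<in>splittings (add_mset x K). if x \<in># A then F A B * split_coeff K (A - {#x#}) B else 0)
      = (\<Sum>(A, B)\<in>splittings K. F (add_mset x A) B * split_coeff K A B)"
  proof -
    have "(\<Sum>(A, B)\<in>splittings (add_mset x K). if x \<in># A then F A B * split_coeff K (A - {#x#}) B else 0)
        = (\<Sum>(A, B)\<in>{(A, B) \<in> splittings (add_mset x K). x \<in># A}. F A B * split_coeff K (A - {#x#}) B)"
      by (rule sum.mono_neutral_cong_right) (auto simp: finite_splittings split: if_splits)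
    also have "\<dots> = (\<Sum>(A, B)\<in>splittings K. F (add_mset x A) B * split_coeff K A B)"
      unfolding splittings_add_mset_left by (subst sum.reindex) (auto simp: inj_on_def split_def)
    finally show ?thesis .
  qed
  have right: "(\<Sum>(A, B)\<in>splittings (add_mset x K). if x \<in># B then F A B * split_coeff K A (B - {#x#}) else 0)
      = (\<Sum>(A, B)\<in>splittings K. F A (add_mset x B) * split_coeff K A B)"
  proof -
    have "(\<Sum>(A, B)\<in>splittings (add_mset x K). if x \<in># B then F A B * split_coeff K A (B - {#x#}) else 0)
        = (\<Sum>(A, B)\<in>{(A, B) \<in> splittings (add_mset x K). x \<in># B}. F A B * split_coeff K A (B - {#x#}))"
      by (rule sum.mono_neutral_cong_right) (auto simp: finite_splittings split: if_splits)
    also have "\<dots> = (\<Sum>(A, B)\<in>splittings K. F A (add_mset x B) * split_coeff K A B)"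
      unfolding splittings_add_mset_right by (subst sum.reindex) (auto simp: inj_on_def split_def)
    finally show ?thesis .
  qed
  have "(\<Sum>(A, B)\<in>splittings (add_mset x K). F A B * split_coeff (add_mset x K) A B)
      = (\<Sum>(A, B)\<in>splittings (add_mset x K). (if x \<in># A then F A B * split_coeff K (A - {#x#}) B else 0)
          + (if x \<in># B then F A B * split_coeff K A (B - {#x#}) else 0))"
    by (intro sum.cong refl) (auto simp: splittings_def split_coeff_add_mset distrib_left)
  also have "\<dots> = (\<Sum>(A, B)\<in>splittings K. (F (add_mset x A) B + F A (add_mset x B)) * split_coeff K A B)"
    by (simp add: split_def sum.distrib left[unfolded split_def] right[unfolded split_def] distrib_right)
  finally show ?thesis .
qed

lemma sum_Pow_eq_sum_splittings:
  fixes g :: "'b \<Rightarrow> nat" and F :: "nat multiset \<Rightarrow> nat multiset \<Rightarrow> real"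
  assumes "finite N"
  shows "(\<Sum>I\<in>Pow N. F (image_mset g (mset_set I)) (image_mset g (mset_set (N - I))))
       = (\<Sum>(A, B)\<in>splittings (image_mset g (mset_set N)).
            F A B * split_coeff (image_mset g (mset_set N)) A B)"
  using assms
proof (induction N arbitrary: F rule: finite_induct)
  case empty
  have "splittings ({#} :: nat multiset) = {({#}, {#})}" by (auto simp: splittings_def)
  then show ?case by (simp add: split_coeff_def aut_def)
next
  case (insert a N)
  let ?m = "\<lambda>I. image_mset g (mset_set I)"
  have insert_Diff: "?m (insert a N - I) = add_mset (g a) (?m (N - I))" if "I \<in> Pow N" for I
  proof -
    have "insert a N - I = insert a (N - I)" using that insert by auto
    then show ?thesis using insert by simp
  qed
  have insert_Diff_insert: "?m (insert a N - insert a I) = ?m (N - I)" if "I \<in> Pow N" for I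
    using that insert by (metis Diff_insert2 Diff_insert_absorb)
  have insert_sub: "?m (insert a I) = add_mset (g a) (?m I)" if "I \<in> Pow N" for I
  proof -
    have "finite I" "a \<notin> I" using that insert finite_subset by auto
    then show ?thesis by simp
  qed
  have "(\<Sum>I\<in>Pow (insert a N). F (?m I) (?m (insert a N - I)))
      = (\<Sum>I\<in>Pow N. F (?m I) (add_mset (g a) (?m (N - I))) + F (add_mset (g a) (?m I)) (?m (N - I)))"
    using insert by (simp add: sum_Pow_insert insert_Diff insert_Diff_insert insert_sub sum.distrib)
  also have "\<dots> = (\<Sum>(A, B)\<in>splittings (?m N).
      (F A (add_mset (g a) B) + F (add_mset (g a) A) B) * split_coeff (?m N) A B)"
    by (rule insert.IH)
  also have "\<dots> = (\<Sum>(A, B)\<in>splittings (?m (insert a N)). F A B * split_coeff (?m (insert a N)) A B)"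
    using insert by (simp add: sum_splittings_add_mset add.commute)
  finally show ?case .
qed

lemma sum_multiset_splittings_eq_sum_Pow:
  fixes g :: "'b \<Rightarrow> nat"
  assumes N: "finite N"
  defines "K \<equiv> image_mset g (mset_set N)" and "t \<equiv> \<lambda>i. real (g i)"
  shows "(\<Sum>(A, B)\<in>{(A, B). A + B = K \<and> A \<noteq> {#} \<and> B \<noteq> {#}}.
          (real (sum_mset A) powi (int (size A) - 2) / real (aut A)) *
          (real (sum_mset B) powi (int (size B) - 2) / real (aut B)) * real (aut K))
       = (\<Sum>I\<in>Pow N - {{}, N}. cayley t I * cayley t (N - I))"
proof -
  let ?m = "\<lambda>I. image_mset g (mset_set I)"
  define F where "F = (\<lambda>A B. if A \<noteq> {#} \<and> B \<noteq> {#} then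
      real (sum_mset A) powi (int (size A) - 2) * real (sum_mset B) powi (int (size B) - 2) else 0)"
  have "(\<Sum>(A, B)\<in>{(A, B). A + B = K \<and> A \<noteq> {#} \<and> B \<noteq> {#}}.
          (real (sum_mset A) powi (int (size A) - 2) / real (aut A)) *
          (real (sum_mset B) powi (int (size B) - 2) / real (aut B)) * real (aut K))
      = (\<Sum>(A, B)\<in>splittings K. F A B * split_coeff K A B)"
    by (rule sum.mono_neutral_cong_left)
      (auto simp: finite_splittings[unfolded splittings_def] splittings_def F_def split_coeff_def)
  also have "\<dots> = (\<Sum>I\<in>Pow N. F (?m I) (?m (N - I)))"
    unfolding K_def by (rule sum_Pow_eq_sum_splittings[OF N, symmetric])
  also have "\<dots> = (\<Sum>I\<in>Pow N - {{}, N}. cayley t I * cayley t (N - I))"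
  proof (rule sum.mono_neutral_cong_right)
    show "\<forall>I\<in>Pow N - (Pow N - {{}, N}). F (?m I) (?m (N - I)) = 0"
      by (auto simp: F_def)
    fix I assume "I \<in> Pow N - {{}, N}"
    moreover have "finite I" "finite (N - I)" if "I \<subseteq> N" using that N finite_subset by auto
    ultimately have "?m I \<noteq> {#}" "?m (N - I) \<noteq> {#}" by (auto simp: mset_set_empty_iff)
    moreover have "real (sum_mset (?m J)) = weight t J" for J
      by (simp add: weight_def t_def sum_unfold_sum_mset[symmetric])
    ultimately show "F (?m I) (?m (N - I)) = cayley t I * cayley t (N - I)"
      unfolding F_def cayley_def by (simp only: size_image_mset size_mset_set if_True simp_thms)
  qed (use N in auto)
  finally show ?thesis .
qed

theorem sum_multiset_splittings_cayley:
  assumes K: "is_partition K" "size K \<ge> 2"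
  shows "(1/2) * (\<Sum>(A, B)\<in>{(A, B). A + B = K \<and> A \<noteq> {#} \<and> B \<noteq> {#}}.
          (real (sum_mset A) powi (int (size A) - 2) / real (aut A)) *
          (real (sum_mset B) powi (int (size B) - 2) / real (aut B)) * real (aut K))
       = real (sum_mset K) powi (int (size K) - 4) *
         (real (sum_mset K) * (\<Sum>k\<in>#K. 1 / real k)
          - (1/2) * real_of_int ((int (size K) - 2) * (int (size K) - 3)))"
proof -
  obtain xs where "mset xs = K" using ex_mset by blast
  define N where "N = {..<length xs}"
  define t where "t = (\<lambda>i. real (xs ! i))"
  have N: "finite N" by (simp add: N_def)
  have K_eq: "K = image_mset (nth xs) (mset_set N)"
    using \<open>mset xs = K\<close> mset_map[of "nth xs" "[0..<length xs]"]
    by (simp add: N_def map_nth atLeast0LessThan)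
  have pos: "t i > 0" if "i \<in> N" for i
    using that N K(1) K_eq by (auto simp: is_partition_def t_def)
  have card_N: "card N = size K" using K_eq by simp
  have weight_N: "weight t N = real (sum_mset K)"
    unfolding K_eq t_def weight_def
    by (simp add: sum_unfold_sum_mset image_mset.compositionality comp_def)
  have recip: "(\<Sum>i\<in>N. 1 / t i) = (\<Sum>k\<in>#K. 1 / real k)"
    unfolding K_eq t_def by (simp add: sum_unfold_sum_mset image_mset.compositionality comp_def)
  have "weight t N > 0"
    using pos card_N K(2) N unfolding weight_def by (intro sum_pos) auto
  then have "(\<Sum>I\<in>Pow N - {{}, N}. cayley t I * cayley t (N - I))
      = weight t N powi (int (size K) - 4) *
        (2 * weight t N * (\<Sum>i\<in>N. 1 / t i) - of_int ((int (size K) - 2) * (int (size K) - 3)))"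
    using sum_complementary_cayley[OF N, of t] pos card_N K(2) by fastforce
  then show ?thesis
    using sum_multiset_splittings_eq_sum_Pow[OF N, of "nth xs"]
    unfolding K_eq[symmetric] t_def[symmetric] weight_N recip by (simp add: algebra_simps)
qed

theorem mainTheorem6:
  fixes m :: nat and t :: "nat \<Rightarrow> 'a :: field_char_0"
  assumes m2: "m \<ge> 2"
    and nz: "\<And>i. i \<in> {1..m} \<Longrightarrow> t i \<noteq> 0"
    and tM: "m < 4 \<Longrightarrow> (\<Sum>i\<in>{1..m}. t i) \<noteq> 0"
  shows
    "((\<Sum>(I, J)\<in>{(I, J). I \<union> J = {1..m} \<and> I \<inter> J = {} \<and> I \<noteq> {} \<and> J \<noteq> {}}.
        (\<Sum>i\<in>I. t i) powi (int (card I) - 2) * (\<Sum>j\<in>J. t j) powi (int (card J) - 2))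
     = (\<Sum>i\<in>{1..m}. t i) powi (int m - 4) *
        (2 * (\<Sum>i\<in>{1..m}. t i) * (\<Sum>i\<in>{1..m}. 1 / t i)
         - of_int ((int m - 2) * (int m - 3)))) \<and>
    (\<forall>ka :: nat multiset. is_partition ka \<and> size ka = m \<longrightarrow>
      (1/2) * (\<Sum>(la, mu)\<in>{(la, mu). la + mu = ka \<and> la \<noteq> {#} \<and> mu \<noteq> {#}}.
          (real (sum_mset la) powi (int (size la) - 2) / real (aut la)) *
          (real (sum_mset mu) powi (int (size mu) - 2) / real (aut mu)) * real (aut ka))
      = real (sum_mset ka) powi (int m - 4) *
        (real (sum_mset ka) * (\<Sum>k\<in>#ka. 1 / real k) - (1/2) * real_of_int ((int m - 2) * (int m - 3))))"
  using sum_set_splittings_cayley[of "{1..m}" t] sum_multiset_splittings_cayley m2 nz tM by auto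

end
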